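(* Every $k$-colorable graph of pathwidth at most $p$ is $p(k-1)$-almost equitably $k$-colorable.
   Context: A $k$-coloring is equitable if its $k$ color classes (stable sets) have sizes pairwise differing by at most one. A graph $G$ is $q$-almost equitably $k$-colorable if there is a set $X$ of at most $q$ vertices such that $G\setminus X$ has an equitable $k$-coloring. *)

theory Defs
  imports Main
begin

definition graph :: "'a set \<Rightarrow> 'a set set \<Rightarrow> bool" where
  "graph V E \<longleftrightarrow> finite V \<and> (\<forall>e\<in>E. e \<subseteq> V \<and> card e = 2)"

definition path_decomposition :: "'a set \<Rightarrow> 'a set set \<Rightarrow> 'a set list \<Rightarrow> bool" where
  "path_decomposition V E Bs \<longleftrightarrow>
     (\<forall>B\<in>set Bs. B \<subseteq> V) \<and>
     (\<forall>v\<in>V. \<exists>i<length Bs. v \<in> Bs ! i) \<and>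
     (\<forall>e\<in>E. \<exists>i<length Bs. e \<subseteq> Bs ! i) \<and>
     (\<forall>v i j l. i \<le> j \<longrightarrow> j \<le> l \<longrightarrow> l < length Bs \<longrightarrow> v \<in> Bs ! i \<longrightarrow> v \<in> Bs ! l
        \<longrightarrow> v \<in> Bs ! j)"

definition pathwidth_le :: "'a set \<Rightarrow> 'a set set \<Rightarrow> nat \<Rightarrow> bool" where
  "pathwidth_le V E p \<longleftrightarrow>
     (\<exists>Bs. path_decomposition V E Bs \<and> (\<forall>B\<in>set Bs. card B \<le> p + 1))"

definition proper_coloring :: "'a set \<Rightarrow> 'a set set \<Rightarrow> nat \<Rightarrow> ('a \<Rightarrow> nat) \<Rightarrow> bool" where
  "proper_coloring V E k c \<longleftrightarrow>
     (\<forall>v\<in>V. c v < k) \<and> (\<forall>e\<in>E. \<forall>u\<in>e. \<forall>v\<in>e. u \<noteq> v \<longrightarrow> c u \<noteq> c v)"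

definition colorable :: "'a set \<Rightarrow> 'a set set \<Rightarrow> nat \<Rightarrow> bool" where
  "colorable V E k \<longleftrightarrow> (\<exists>c. proper_coloring V E k c)"

definition equitable_coloring :: "'a set \<Rightarrow> 'a set set \<Rightarrow> nat \<Rightarrow> ('a \<Rightarrow> nat) \<Rightarrow> bool" where
  "equitable_coloring V E k c \<longleftrightarrow> proper_coloring V E k c \<and>
     (\<forall>i<k. \<forall>j<k. card {v\<in>V. c v = i} \<le> card {v\<in>V. c v = j} + 1)"

definition equitably_colorable :: "'a set \<Rightarrow> 'a set set \<Rightarrow> nat \<Rightarrow> bool" where
  "equitably_colorable V E k \<longleftrightarrow> (\<exists>c. equitable_coloring V E k c)"

definition delete_vertices :: "'a set \<Rightarrow> 'a set set \<Rightarrow> 'a set \<Rightarrow> 'a set \<times> 'a set set" where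
  "delete_vertices V E X = (V - X, {e\<in>E. e \<inter> X = {}})"

definition almost_equitably_colorable :: "'a set \<Rightarrow> 'a set set \<Rightarrow> nat \<Rightarrow> nat \<Rightarrow> bool" where
  "almost_equitably_colorable V E q k \<longleftrightarrow>
     (\<exists>X. X \<subseteq> V \<and> card X \<le> q \<and>
        (case delete_vertices V E X of (V', E') \<Rightarrow> equitably_colorable V' E' k))"

end

theory Submission
  imports Defs
begin

(* Ordering the vertices by the first bag containing them turns a path decomposition of width p
   into a layout in which, at every threshold, at most p earlier vertices have a neighbour at or
   after the threshold.  Given a proper k-colouring and a target size N, keep N + p (k - 1)
   vertices and peel off an independent set of size ceil(N / k): take a colour class a of at least
   that size and another class b of at most p more, and sweep the threshold along the layout.
   At the first threshold where the independent "front" (a-vertices before it without a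
   b-neighbour after it, plus b-vertices after it) is large enough, at most p further vertices
   cross the threshold between a and b.  Discarding them leaves no a-b edge, so a and b merge
   into one colour and induction on k applies to the rest. *)

definition adj :: "'a set set \<Rightarrow> 'a \<Rightarrow> 'a \<Rightarrow> bool" where
  "adj E u w \<longleftrightarrow> (\<exists>e\<in>E. u \<in> e \<and> w \<in> e \<and> u \<noteq> w)"

lemma adj_sym: "adj E u w \<Longrightarrow> adj E w u"
  unfolding adj_def by blast

definition proper_on :: "'a set set \<Rightarrow> 'a set \<Rightarrow> nat \<Rightarrow> ('a \<Rightarrow> nat) \<Rightarrow> bool" where
  "proper_on E W k c \<longleftrightarrow> (\<forall>v\<in>W. c v < k) \<and> (\<forall>u\<in>W. \<forall>w\<in>W. adj E u w \<longrightarrow> c u \<noteq> c w)"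

lemma proper_on_subset: "proper_on E V k c \<Longrightarrow> W \<subseteq> V \<Longrightarrow> proper_on E W k c"
  unfolding proper_on_def by blast

lemma proper_coloring_imp_proper_on: "proper_coloring V E k c \<Longrightarrow> proper_on E V k c"
  unfolding proper_coloring_def proper_on_def adj_def by blast

definition balanced_coloring :: "'a set set \<Rightarrow> 'a set \<Rightarrow> nat \<Rightarrow> ('a \<Rightarrow> nat) \<Rightarrow> bool" where
  "balanced_coloring E V k d \<longleftrightarrow>
     proper_on E V k d \<and> (\<forall>i<k. card {v\<in>V. d v = i} = (card V + i) div k)"

section \<open>Layouts of small vertex separation\<close>

definition separator :: "'a set set \<Rightarrow> ('a \<Rightarrow> nat) \<Rightarrow> 'a set \<Rightarrow> nat \<Rightarrow> 'a set" where
  "separator E \<kappa> V T = {u\<in>V. \<kappa> u < T \<and> (\<exists>w\<in>V. T \<le> \<kappa> w \<and> adj E u w)}"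

definition separation_le :: "'a set set \<Rightarrow> 'a set \<Rightarrow> ('a \<Rightarrow> nat) \<Rightarrow> nat \<Rightarrow> bool" where
  "separation_le E V \<kappa> p \<longleftrightarrow> inj_on \<kappa> V \<and> (\<forall>T. card (separator E \<kappa> V T) \<le> p)"

lemma separation_le_subset:
  assumes "finite V" "separation_le E V \<kappa> p" "W \<subseteq> V"
  shows "separation_le E W \<kappa> p"
proof -
  have "card (separator E \<kappa> W T) \<le> card (separator E \<kappa> V T)" for T
    by (rule card_mono) (use assms(1,3) in \<open>auto simp: separator_def\<close>)
  then show ?thesis
    using assms(2,3) inj_on_subset[of \<kappa> V W] unfolding separation_le_def by (meson le_trans)
qed

lemma exists_inj_refining:
  fixes f :: "'a \<Rightarrow> nat"
  assumes "finite V"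
  shows "\<exists>\<kappa>::'a \<Rightarrow> nat. inj_on \<kappa> V \<and> (\<forall>u\<in>V. \<forall>w\<in>V. \<kappa> u \<le> \<kappa> w \<longrightarrow> f u \<le> f w)"
proof -
  obtain g :: "'a \<Rightarrow> nat" and n where g: "g ` V = {i. i < n}" "inj_on g V"
    using finite_imp_inj_to_nat_seg[OF assms] by blast
  define \<kappa> where "\<kappa> v = f v * n + g v" for v
  have g_less: "g v < n" if "v \<in> V" for v
    using g(1) that by blast
  have \<kappa>: "\<kappa> v div n = f v" "\<kappa> v mod n = g v" if "v \<in> V" for v
    using g_less[OF that] unfolding \<kappa>_def by auto
  have "inj_on \<kappa> V"
    by (rule inj_onI) (metis \<kappa>(2) g(2) inj_on_eq_iff)
  moreover have "f u \<le> f w" if "u \<in> V" "w \<in> V" "\<kappa> u \<le> \<kappa> w" for u w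
    using div_le_mono[OF that(3), of n] \<kappa> that by metis
  ultimately show ?thesis
    by blast
qed

lemma path_decomposition_bag_subset:
  "path_decomposition V E Bs \<Longrightarrow> B \<in> set Bs \<Longrightarrow> B \<subseteq> V"
  unfolding path_decomposition_def by (elim conjE) (rule bspec)

lemma path_decomposition_covers_vertex:
  "path_decomposition V E Bs \<Longrightarrow> v \<in> V \<Longrightarrow> \<exists>i<length Bs. v \<in> Bs ! i"
  unfolding path_decomposition_def by (elim conjE) (rule bspec)

lemma path_decomposition_covers_edge:
  "path_decomposition V E Bs \<Longrightarrow> e \<in> E \<Longrightarrow> \<exists>i<length Bs. e \<subseteq> Bs ! i"
  unfolding path_decomposition_def by (elim conjE) (rule bspec)

lemma path_decomposition_bag_between:
  "path_decomposition V E Bs \<Longrightarrow> i \<le> j \<Longrightarrow> j \<le> l \<Longrightarrow> l < length Bs \<Longrightarrow>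
    v \<in> Bs ! i \<Longrightarrow> v \<in> Bs ! l \<Longrightarrow> v \<in> Bs ! j"
  unfolding path_decomposition_def by blast

definition first_bag :: "'a set list \<Rightarrow> 'a \<Rightarrow> nat" where
  "first_bag Bs v = (LEAST i. i < length Bs \<and> v \<in> Bs ! i)"

lemma first_bag_in_bag:
  assumes "path_decomposition V E Bs" "v \<in> V"
  shows "first_bag Bs v < length Bs \<and> v \<in> Bs ! first_bag Bs v"
  unfolding first_bag_def
  by (rule LeastI_ex) (use path_decomposition_covers_vertex[OF assms] in blast)

lemma first_bag_le: "i < length Bs \<Longrightarrow> v \<in> Bs ! i \<Longrightarrow> first_bag Bs v \<le> i"
  unfolding first_bag_def by (rule Least_le) blast

text \<open>A separator vertex u has a neighbour w beyond x, so u lies in a bag no earlier than the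
  first bag of x and also in its own first bag, which is no later; by convexity it lies in the
  first bag of x.\<close>
lemma separator_subset_first_bag:
  assumes pd: "path_decomposition V E Bs"
    and refines: "\<forall>u\<in>V. \<forall>w\<in>V. \<kappa> u \<le> \<kappa> w \<longrightarrow> first_bag Bs u \<le> first_bag Bs w"
    and x: "x \<in> V" "T \<le> \<kappa> x" and least: "\<forall>y\<in>V. T \<le> \<kappa> y \<longrightarrow> \<kappa> x \<le> \<kappa> y"
  shows "separator E \<kappa> V T \<subseteq> Bs ! first_bag Bs x - {x}"
proof
  fix u
  assume "u \<in> separator E \<kappa> V T"
  then obtain w where u: "u \<in> V" "\<kappa> u < T" and w: "w \<in> V" "T \<le> \<kappa> w" "adj E u w"
    unfolding separator_def by blast
  obtain e where e: "e \<in> E" "u \<in> e" "w \<in> e"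
    using w(3) unfolding adj_def by blast
  obtain i where i: "i < length Bs" "e \<subseteq> Bs ! i"
    using path_decomposition_covers_edge[OF pd e(1)] by blast
  have "first_bag Bs u \<le> first_bag Bs x"
    using refines u x by (meson less_imp_le order_trans)
  moreover have "first_bag Bs x \<le> first_bag Bs w"
    using refines least w x(1) by blast
  moreover have "first_bag Bs w \<le> i"
    using first_bag_le[OF i(1)] i(2) e(3) by blast
  moreover have "u \<in> Bs ! first_bag Bs u" "u \<in> Bs ! i"
    using first_bag_in_bag[OF pd u(1)] i e by auto
  ultimately have "u \<in> Bs ! first_bag Bs x"
    using path_decomposition_bag_between[OF pd _ _ i(1)] by (meson order_trans)
  moreover have "u \<noteq> x"
    using u(2) x(2) by auto
  ultimately show "u \<in> Bs ! first_bag Bs x - {x}"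
    by blast
qed

lemma pathwidth_le_imp_separation_le:
  assumes "finite V" "pathwidth_le V E p"
  shows "\<exists>\<kappa>. separation_le E V \<kappa> p"
proof -
  obtain Bs where pd: "path_decomposition V E Bs" and bags: "\<forall>B\<in>set Bs. card B \<le> p + 1"
    using assms(2) unfolding pathwidth_le_def by blast
  obtain \<kappa> :: "'a \<Rightarrow> nat" where inj: "inj_on \<kappa> V"
    and refines: "\<forall>u\<in>V. \<forall>w\<in>V. \<kappa> u \<le> \<kappa> w \<longrightarrow> first_bag Bs u \<le> first_bag Bs w"
    using exists_inj_refining[OF assms(1)] by blast
  have "card (separator E \<kappa> V T) \<le> p" for T
  proof (cases "\<exists>y\<in>V. T \<le> \<kappa> y")
    case False
    then show ?thesis
      by (simp add: separator_def)
  next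
    case True
    then obtain x where x: "x \<in> V" "T \<le> \<kappa> x" and least: "\<forall>y\<in>V. T \<le> \<kappa> y \<longrightarrow> \<kappa> x \<le> \<kappa> y"
      using ex_has_least_nat[of "\<lambda>y. y \<in> V \<and> T \<le> \<kappa> y" _ \<kappa>] by blast
    define C where "C = Bs ! first_bag Bs x"
    have "C \<in> set Bs" "x \<in> C"
      using first_bag_in_bag[OF pd x(1)] unfolding C_def by auto
    then have "finite C" "card C \<le> p + 1"
      using path_decomposition_bag_subset[OF pd] bags assms(1) finite_subset by blast+
    have "card (separator E \<kappa> V T) \<le> card (C - {x})"
      using separator_subset_first_bag[OF pd refines x least] \<open>finite C\<close>
      unfolding C_def by (intro card_mono) auto
    also have "\<dots> \<le> p"
      using \<open>x \<in> C\<close> \<open>finite C\<close> \<open>card C \<le> p + 1\<close> by simp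
    finally show ?thesis .
  qed
  with inj show ?thesis
    unfolding separation_le_def by blast
qed

section \<open>Sweeping two colour classes along a layout\<close>

locale bicolor_sweep =
  fixes E :: "'a set set" and W :: "'a set" and \<kappa> :: "'a \<Rightarrow> nat" and p :: nat
    and c :: "'a \<Rightarrow> nat" and a b :: nat
  assumes finite_W: "finite W"
    and separation: "separation_le E W \<kappa> p"
    and proper: "\<forall>u\<in>W. \<forall>w\<in>W. adj E u w \<longrightarrow> c u \<noteq> c w"
    and a_neq_b: "a \<noteq> b"
begin

definition early_a :: "nat \<Rightarrow> 'a set" where
  "early_a T = {u\<in>W. \<kappa> u < T \<and> c u = a}"

definition late_b :: "nat \<Rightarrow> 'a set" where
  "late_b T = {u\<in>W. T \<le> \<kappa> u \<and> c u = b}"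

definition crossing_a :: "nat \<Rightarrow> 'a set" where
  "crossing_a T = {u\<in>early_a T. \<exists>w\<in>late_b T. adj E u w}"

definition crossing_b :: "nat \<Rightarrow> 'a set" where
  "crossing_b T = {u\<in>W. \<kappa> u < T \<and> c u = b \<and> (\<exists>w\<in>W. T \<le> \<kappa> w \<and> c w = a \<and> adj E u w)}"

definition front :: "nat \<Rightarrow> 'a set" where
  "front T = (early_a T - crossing_a T) \<union> late_b T"

definition potential :: "nat \<Rightarrow> nat" where
  "potential T = card (early_a T) + card (late_b T) + card (crossing_b T)"

lemma finite_early_a: "finite (early_a T)"
  and finite_late_b: "finite (late_b T)"
  and finite_crossing_a: "finite (crossing_a T)"
  and finite_crossing_b: "finite (crossing_b T)"
  using finite_W by (simp_all add: early_a_def late_b_def crossing_a_def crossing_b_def)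

lemma front_subset: "front T \<subseteq> W"
  unfolding front_def early_a_def late_b_def by blast

lemma finite_front: "finite (front T)"
  using front_subset finite_W by (rule finite_subset)

lemma card_front_crossing: "card (front T) + card (crossing_a T) + card (crossing_b T) = potential T"
proof -
  have "crossing_a T \<subseteq> early_a T"
    unfolding crossing_a_def by blast
  moreover have "early_a T \<inter> late_b T = {}"
    unfolding early_a_def late_b_def by auto
  ultimately have "card (front T) = card (early_a T) - card (crossing_a T) + card (late_b T)"
    unfolding front_def
    by (subst card_Un_disjoint)
      (auto simp: finite_early_a finite_late_b card_Diff_subset finite_crossing_a)
  moreover have "card (crossing_a T) \<le> card (early_a T)"
    using \<open>crossing_a T \<subseteq> early_a T\<close> finite_early_a by (rule card_mono[rotated])
  ultimately show ?thesis
    unfolding potential_def by linarith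
qed

lemma card_crossing_le: "card (crossing_a T) + card (crossing_b T) \<le> p"
proof -
  have "card (crossing_a T) + card (crossing_b T) = card (crossing_a T \<union> crossing_b T)"
    using a_neq_b finite_crossing_a finite_crossing_b
    by (intro card_Un_disjoint[symmetric]) (auto simp: crossing_a_def crossing_b_def early_a_def)
  also have "\<dots> \<le> card (separator E \<kappa> W T)"
    using finite_W
    by (intro card_mono) (auto simp: separator_def crossing_a_def crossing_b_def early_a_def late_b_def)
  also have "\<dots> \<le> p"
    using separation unfolding separation_le_def by blast
  finally show ?thesis .
qed

text \<open>Only the vertex at position T, if any, changes sides.  If it has colour b, its leaving
  late_b compensates for its possible entry into crossing_b.\<close>
lemma potential_Suc_le: "potential (Suc T) \<le> potential T + 1"
proof -
  define Xa where "Xa = {u\<in>W. \<kappa> u = T \<and> c u = a}"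
  define Xb where "Xb = {u\<in>W. \<kappa> u = T \<and> c u = b}"
  have fin: "finite Xa" "finite Xb"
    unfolding Xa_def Xb_def using finite_W by auto
  have "inj_on \<kappa> W"
    using separation unfolding separation_le_def by blast
  then have "card Xa \<le> Suc 0"
    by (subst card_le_Suc0_iff_eq[OF fin(1)]) (auto simp: Xa_def dest: inj_onD)
  have "early_a (Suc T) \<subseteq> early_a T \<union> Xa"
    unfolding early_a_def Xa_def by auto
  then have "card (early_a (Suc T)) \<le> card (early_a T) + card Xa"
    by (meson card_Un_le card_mono finite_early_a fin(1) finite_UnI le_trans)
  moreover have "card (late_b T) = card (late_b (Suc T)) + card Xb"
  proof -
    have "late_b T = late_b (Suc T) \<union> Xb" "late_b (Suc T) \<inter> Xb = {}"
      unfolding late_b_def Xb_def by auto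
    then show ?thesis
      using card_Un_disjoint[OF finite_late_b fin(2)] by simp
  qed
  moreover have "crossing_b (Suc T) \<subseteq> crossing_b T \<union> Xb"
  proof
    fix u
    assume "u \<in> crossing_b (Suc T)"
    then obtain w where "u \<in> W" "\<kappa> u < Suc T" "c u = b"
      and "w \<in> W" "Suc T \<le> \<kappa> w" "c w = a" "adj E u w"
      unfolding crossing_b_def by blast
    then show "u \<in> crossing_b T \<union> Xb"
      unfolding crossing_b_def Xb_def less_Suc_eq
      by (metis (mono_tags, lifting) Suc_leD Un_iff mem_Collect_eq)
  qed
  then have "card (crossing_b (Suc T)) \<le> card (crossing_b T) + card Xb"
    by (meson card_Un_le card_mono finite_crossing_b fin(2) finite_UnI le_trans)
  ultimately show ?thesis
    unfolding potential_def using \<open>card Xa \<le> Suc 0\<close> by linarith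
qed

lemma potential_0: "potential 0 = card {v\<in>W. c v = b}"
proof -
  have "early_a 0 = {}" "crossing_b 0 = {}" "late_b 0 = {v\<in>W. c v = b}"
    unfolding early_a_def crossing_b_def late_b_def by auto
  then show ?thesis
    unfolding potential_def by simp
qed

lemma class_a_subset_front: "\<exists>T. {v\<in>W. c v = a} \<subseteq> front T"
proof -
  obtain M where "\<forall>v\<in>W. \<kappa> v < M"
    using finite_nat_set_iff_bounded[of "\<kappa> ` W"] finite_W by auto
  then have "{v\<in>W. c v = a} \<subseteq> front M"
    unfolding front_def crossing_a_def early_a_def late_b_def by (auto simp: not_le[symmetric])
  then show ?thesis ..
qed

lemma front_independent:
  assumes "u \<in> front T" "w \<in> front T"
  shows "\<not> adj E u w"
proof
  assume uw: "adj E u w"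
  then have "c u \<noteq> c w"
    using proper assms front_subset by blast
  then consider "u \<in> early_a T - crossing_a T" "w \<in> late_b T"
    | "w \<in> early_a T - crossing_a T" "u \<in> late_b T"
    using assms unfolding front_def early_a_def late_b_def by auto
  then show False
  proof cases
    case 1
    then show False
      using uw unfolding crossing_a_def by blast
  next
    case 2
    then show False
      using adj_sym[OF uw] unfolding crossing_a_def by blast
  qed
qed

lemma no_edge_a_b_outside:
  assumes "u \<in> W - (front T \<union> crossing_a T \<union> crossing_b T)"
    and "w \<in> W - (front T \<union> crossing_a T \<union> crossing_b T)"
    and "c u = a" "c w = b"
  shows "\<not> adj E u w"
proof
  assume "adj E u w"
  have "T \<le> \<kappa> u"
    using assms(1,3) unfolding front_def early_a_def by auto
  moreover have "\<kappa> w < T"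
    using assms(2,4) unfolding front_def late_b_def by auto
  ultimately have "w \<in> crossing_b T"
    using assms adj_sym[OF \<open>adj E u w\<close>] unfolding crossing_b_def by blast
  with assms(2) show False
    by blast
qed

text \<open>Take the first threshold at which the front has size s; the potential, which grows by at
  most one per step, is then still at most s + p.\<close>
lemma exists_threshold:
  assumes "s \<le> card {v\<in>W. c v = a}" "card {v\<in>W. c v = b} \<le> s + p"
  shows "\<exists>T. s \<le> card (front T) \<and> potential T \<le> s + p"
proof -
  obtain M where M: "s \<le> card (front M)"
    using class_a_subset_front assms(1) card_mono[OF finite_front] by (meson le_trans)
  define T0 where "T0 = (LEAST T. s \<le> card (front T))"
  have "s \<le> card (front T0)"
    unfolding T0_def using M by (rule LeastI)
  moreover have "potential T0 \<le> s + p"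
  proof (cases T0)
    case 0
    then show ?thesis
      using potential_0 assms(2) by simp
  next
    case (Suc T)
    then have "\<not> s \<le> card (front T)"
      using not_less_Least[of T "\<lambda>T. s \<le> card (front T)"] unfolding T0_def by simp
    then show ?thesis
      using potential_Suc_le[of T] card_front_crossing[of T] card_crossing_le[of T]
      unfolding Suc by linarith
  qed
  ultimately show ?thesis
    by blast
qed

theorem split_off_independent_set:
  assumes "s \<le> card {v\<in>W. c v = a}" "card {v\<in>W. c v = b} \<le> s + p"
  shows "\<exists>I R. I \<subseteq> W \<and> R \<subseteq> W \<and> I \<inter> R = {} \<and> card I = s \<and> card W \<le> card R + s + p \<and>
    (\<forall>u\<in>I. \<forall>w\<in>I. \<not> adj E u w) \<and> (\<forall>u\<in>R. \<forall>w\<in>R. c u = a \<longrightarrow> c w = b \<longrightarrow> \<not> adj E u w)"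
proof -
  obtain T where T: "s \<le> card (front T)" "potential T \<le> s + p"
    using exists_threshold[OF assms] by blast
  obtain I where I: "I \<subseteq> front T" "card I = s"
    using obtain_subset_with_card_n[OF T(1)] by metis
  define U where "U = front T \<union> crossing_a T \<union> crossing_b T"
  define R where "R = W - U"
  have "card W \<le> card (R \<union> U)"
    unfolding R_def U_def
    using finite_W finite_front finite_crossing_a finite_crossing_b by (intro card_mono) auto
  also have "\<dots> \<le> card R + (card (front T) + card (crossing_a T) + card (crossing_b T))"
    unfolding U_def by (meson add_le_mono card_Un_le le_trans order_refl)
  finally have "card W \<le> card R + s + p"
    using card_front_crossing[of T] T(2) by linarith
  moreover have "I \<subseteq> W" "R \<subseteq> W" "I \<inter> R = {}"
    using I(1) front_subset unfolding R_def U_def by auto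
  moreover have "\<forall>u\<in>I. \<forall>w\<in>I. \<not> adj E u w"
    using I(1) front_independent by blast
  moreover have "\<forall>u\<in>R. \<forall>w\<in>R. c u = a \<longrightarrow> c w = b \<longrightarrow> \<not> adj E u w"
    using no_edge_a_b_outside unfolding R_def U_def by blast
  ultimately show ?thesis
    using I(2) by blast
qed

end

section \<open>Balanced colourings of large subsets\<close>

lemma card_eq_sum_card_classes:
  assumes "finite V" "\<forall>v\<in>V. c v < (k::nat)"
  shows "card V = (\<Sum>i<k. card {v\<in>V. c v = i})"
proof -
  have "V = (\<Union>i<k. {v\<in>V. c v = i})"
    using assms(2) by auto
  also have "card \<dots> = (\<Sum>i<k. card {v\<in>V. c v = i})"
    by (rule card_UN_disjoint) (use assms(1) in auto)
  finally show ?thesis .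
qed

lemma exists_class_card_ge:
  assumes "finite W" "\<forall>v\<in>W. c v < n" "n * s < card W + n"
  shows "\<exists>a<n. s \<le> card {v\<in>W. c v = a}"
proof (rule ccontr)
  assume "\<not> ?thesis"
  then have "(\<Sum>i<n. card {v\<in>W. c v = i} + 1) \<le> n * s"
    using sum_bounded_above[of "{..<n}" "\<lambda>i. card {v\<in>W. c v = i} + 1" s] by fastforce
  then have "card W + n \<le> n * s"
    by (simp add: sum_Suc card_eq_sum_card_classes[OF assms(1,2)])
  with assms(3) show False
    by linarith
qed

lemma exists_other_class_card_le:
  assumes "finite W" "\<forall>v\<in>W. c v < n" "a < n"
    and "card W < card {v\<in>W. c v = a} + (n - 1) * Suc t"
  shows "\<exists>b<n. b \<noteq> a \<and> card {v\<in>W. c v = b} \<le> t"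
proof (rule ccontr)
  assume "\<not> ?thesis"
  then have "card ({..<n} - {a}) * Suc t \<le> (\<Sum>i\<in>{..<n} - {a}. card {v\<in>W. c v = i})"
    using sum_bounded_below[of "{..<n} - {a}" "Suc t" "\<lambda>i. card {v\<in>W. c v = i}"] by fastforce
  moreover have "card W = card {v\<in>W. c v = a} + (\<Sum>i\<in>{..<n} - {a}. card {v\<in>W. c v = i})"
    using card_eq_sum_card_classes[OF assms(1,2)] assms(3) by (simp add: sum.remove)
  ultimately show False
    using assms(3,4) by simp
qed

lemma proper_on_merge_colors:
  assumes "proper_on E R (Suc n) c" "a < Suc n" "b < Suc n" "a \<noteq> b"
    and "\<forall>u\<in>R. \<forall>w\<in>R. c u = a \<longrightarrow> c w = b \<longrightarrow> \<not> adj E u w"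
  shows "proper_on E R n (\<lambda>v. let x = if c v = a then b else c v in if a < x then x - 1 else x)"
proof -
  define m where "m x = (if a < x then x - 1 else x)" for x :: nat
  have m_inj: "m x = m y \<Longrightarrow> x \<noteq> a \<Longrightarrow> y \<noteq> a \<Longrightarrow> x = y" for x y
    unfolding m_def by (auto split: if_splits)
  have "m (if c v = a then b else c v) < n" if "v \<in> R" for v
    using assms(1-4) that unfolding proper_on_def m_def by auto
  moreover have "m (if c u = a then b else c u) \<noteq> m (if c w = a then b else c w)"
    if "u \<in> R" "w \<in> R" "adj E u w" for u w
  proof -
    have "c u \<noteq> c w"
      using assms(1) that unfolding proper_on_def by blast
    moreover have "\<not> (c u = a \<and> c w = b)"
      using assms(5) that by blast
    moreover have "\<not> (c w = a \<and> c u = b)"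
      using assms(5) that(1,2) adj_sym[OF that(3)] by blast
    ultimately show ?thesis
      using m_inj assms(4) by (smt (verit))
  qed
  ultimately show ?thesis
    unfolding proper_on_def m_def Let_def by auto
qed

lemma proper_on_add_independent:
  assumes "proper_on E R n d" "\<forall>u\<in>I. \<forall>w\<in>I. \<not> adj E u w"
  shows "proper_on E (I \<union> R) (Suc n) (\<lambda>v. if v \<in> I then n else d v)"
  using assms unfolding proper_on_def by (auto simp: less_Suc_eq)

lemma add_div_le_Suc_add_div:
  fixes N k i j :: nat
  assumes "i < k"
  shows "(N + i) div k \<le> (N + j) div k + 1"
proof -
  have "(N + i) div k \<le> (N + k) div k"
    using assms by (intro div_le_mono) simp
  also have "\<dots> = N div k + 1"
    using assms by (simp add: div_add_self2)
  also have "N div k \<le> (N + j) div k"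
    by (rule div_le_mono) simp
  finally show ?thesis
    by simp
qed

text \<open>Removing the largest part (N + k) div (k + 1) from the balanced split of N into k + 1
  parts leaves the balanced split of the rest into k parts.\<close>
lemma balanced_split_drop_last:
  fixes N k i :: nat
  assumes "0 < k" "i < k"
  shows "(N - (N + k) div Suc k + i) div k = (N + i) div Suc k"
proof -
  define q where "q = N div Suc k"
  define r where "r = N mod Suc k"
  have N: "N = q * Suc k + r"
    unfolding q_def r_def using div_mult_mod_eq[of N "Suc k"] by simp
  have r: "r \<le> k"
    unfolding r_def using mod_less_divisor[of "Suc k" N] by linarith
  show ?thesis
  proof (cases "r = 0")
    case True
    have "(N + k) div Suc k = q" "(N + i) div Suc k = q" "(N - q + i) div k = q"
      using N True assms by (auto intro!: div_nat_eqI simp: algebra_simps)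
    then show ?thesis
      by simp
  next
    case False
    have last: "(N + k) div Suc k = Suc q"
      using N False r by (intro div_nat_eqI) auto
    show ?thesis
    proof (cases "Suc k \<le> r + i")
      case True
      have "(N + i) div Suc k = Suc q" "(N - Suc q + i) div k = Suc q"
        using N True False assms r by (auto intro!: div_nat_eqI simp: algebra_simps)
      then show ?thesis
        using last by simp
    next
      case False': False
      have "(N + i) div Suc k = q" "(N - Suc q + i) div k = q"
        using N False' False assms r by (auto intro!: div_nat_eqI simp: algebra_simps)
      then show ?thesis
        using last by simp
    qed
  qed
qed

lemma balanced_coloring_add_independent:
  assumes "0 < n" "finite I" "finite R" "I \<inter> R = {}" "\<forall>u\<in>I. \<forall>w\<in>I. \<not> adj E u w"
    and "card I = (card I + card R + n) div Suc n" "balanced_coloring E R n d"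
  shows "balanced_coloring E (I \<union> R) (Suc n) (\<lambda>v. if v \<in> I then n else d v)"
proof -
  define N where "N = card (I \<union> R)"
  have N: "N = card I + card R"
    unfolding N_def using assms(2-4) by (rule card_Un_disjoint)
  have "card {v\<in>I \<union> R. (if v \<in> I then n else d v) = i} = (N + i) div Suc n"
    if "i < Suc n" for i
  proof (cases "i = n")
    case True
    have "{v\<in>I \<union> R. (if v \<in> I then n else d v) = i} = I"
      using True assms(4,7) unfolding balanced_coloring_def proper_on_def by auto
    then show ?thesis
      using assms(6) True N by simp
  next
    case False
    then have "i < n"
      using that by simp
    have "{v\<in>I \<union> R. (if v \<in> I then n else d v) = i} = {v\<in>R. d v = i}"
      using \<open>i < n\<close> assms(4) by auto
    moreover have "card R = N - (N + n) div Suc n"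
      using assms(6) N by simp
    ultimately show ?thesis
      using assms(1,7) \<open>i < n\<close> balanced_split_drop_last[of n i N]
      unfolding balanced_coloring_def by simp
  qed
  then show ?thesis
    using proper_on_add_independent[OF _ assms(5)] assms(7)
    unfolding balanced_coloring_def N_def by blast
qed

lemma peel_color_class:
  assumes "finite W" "separation_le E W \<kappa> p" "proper_on E W (Suc n) c" "0 < n"
    and "card W = N + p * n"
  shows "\<exists>I R d. I \<subseteq> W \<and> R \<subseteq> W \<and> I \<inter> R = {} \<and> card I = (N + n) div Suc n \<and>
    N - (N + n) div Suc n + p * (n - 1) \<le> card R \<and>
    (\<forall>u\<in>I. \<forall>w\<in>I. \<not> adj E u w) \<and> proper_on E R n d"
proof -
  define s where "s = (N + n) div Suc n"
  have "Suc n * s + (N + n) mod Suc n = N + n"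
    unfolding s_def by (rule mult_div_mod_eq)
  then have "Suc n * s \<le> N + n" "N \<le> Suc n * s"
    using mod_less_divisor[of "Suc n" "N + n"] by linarith+
  have s_le: "s \<le> N"
    unfolding s_def using less_mult_imp_div_less[of "N + n" "Suc N" "Suc n"] by simp
  have colors: "\<forall>v\<in>W. c v < Suc n"
    using assms(3) unfolding proper_on_def by blast
  obtain a where a: "a < Suc n" "s \<le> card {v\<in>W. c v = a}"
    using exists_class_card_ge[OF assms(1) colors, of s] \<open>Suc n * s \<le> N + n\<close> assms(5) by auto
  obtain b where b: "b < Suc n" "b \<noteq> a" "card {v\<in>W. c v = b} \<le> s + p"
    using exists_other_class_card_le[OF assms(1) colors a(1), of "s + p"]
      a(2) \<open>N \<le> Suc n * s\<close> assms(4,5)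
    by (fastforce simp: algebra_simps)
  interpret bicolor_sweep E W \<kappa> p c a b
    using assms(1-3) b(2) unfolding proper_on_def by unfold_locales auto
  obtain I R where IR: "I \<subseteq> W" "R \<subseteq> W" "I \<inter> R = {}" "card I = s" "card W \<le> card R + s + p"
    and indep: "\<forall>u\<in>I. \<forall>w\<in>I. \<not> adj E u w"
    and no_a_b: "\<forall>u\<in>R. \<forall>w\<in>R. c u = a \<longrightarrow> c w = b \<longrightarrow> \<not> adj E u w"
    using split_off_independent_set[OF a(2) b(3)] by blast
  have "N - s + p * (n - 1) \<le> card R"
    using IR(5) assms(4,5) s_le by (cases n) (auto simp: algebra_simps)
  moreover obtain d where "proper_on E R n d"
    using proper_on_merge_colors[OF proper_on_subset[OF assms(3) IR(2)] a(1) b(1) b(2)[symmetric]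
        no_a_b] ..
  ultimately show ?thesis
    unfolding s_def[symmetric] using IR(1-4) indep by blast
qed

lemma exists_balanced_subcoloring:
  assumes "finite V" "separation_le E V \<kappa> p" "proper_on E V k c" "N + p * (k - 1) \<le> card V"
  shows "\<exists>V' d. V' \<subseteq> V \<and> card V' = N \<and> balanced_coloring E V' k d"
  using assms
proof (induction k arbitrary: V c N)
  case 0
  then show ?case
    unfolding balanced_coloring_def proper_on_def by auto
next
  case (Suc n)
  show ?case
  proof (cases "n = 0")
    case True
    obtain V' where V': "V' \<subseteq> V" "card V' = N"
      using obtain_subset_with_card_n Suc.prems(4) by (metis le_add1 le_trans)
    have "balanced_coloring E V' (Suc n) (\<lambda>_. 0)"
      using proper_on_subset[OF Suc.prems(3) V'(1)] True
      unfolding balanced_coloring_def proper_on_def by auto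
    with V' show ?thesis
      by blast
  next
    case False
    obtain W where W: "W \<subseteq> V" "card W = N + p * n"
      using obtain_subset_with_card_n Suc.prems(4) by (metis diff_Suc_1)
    have "finite W"
      using W(1) Suc.prems(1) by (rule finite_subset)
    define s where "s = (N + n) div Suc n"
    obtain I R d where IR: "I \<subseteq> W" "R \<subseteq> W" "I \<inter> R = {}" "card I = s"
      and R: "N - s + p * (n - 1) \<le> card R"
      and indep: "\<forall>u\<in>I. \<forall>w\<in>I. \<not> adj E u w" and d: "proper_on E R n d"
      using peel_color_class[OF \<open>finite W\<close> separation_le_subset[OF Suc.prems(1,2) W(1)]
          proper_on_subset[OF Suc.prems(3) W(1)] _ W(2)] False
      unfolding s_def[symmetric] by blast
    have "finite R"
      using IR(2) \<open>finite W\<close> by (rule finite_subset)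
    obtain R' d' where R': "R' \<subseteq> R" "card R' = N - s" "balanced_coloring E R' n d'"
      using Suc.IH[OF \<open>finite R\<close> separation_le_subset[OF Suc.prems(1,2)] d R] IR(2) W(1)
      by (meson order_trans)
    have "finite I" "finite R'"
      using IR(1) R'(1) \<open>finite W\<close> \<open>finite R\<close> finite_subset by blast+
    moreover have "I \<inter> R' = {}"
      using IR(3) R'(1) by blast
    moreover have "s \<le> N"
      unfolding s_def using less_mult_imp_div_less[of "N + n" "Suc N" "Suc n"] by simp
    ultimately have "card (I \<union> R') = N"
      "balanced_coloring E (I \<union> R') (Suc n) (\<lambda>v. if v \<in> I then n else d' v)"
      using balanced_coloring_add_independent[of n I R' E d'] False indep IR(4) R'(2,3)
      by (simp_all add: card_Un_disjoint s_def)
    moreover have "I \<union> R' \<subseteq> V"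
      using IR(1,2) R'(1) W(1) by blast
    ultimately show ?thesis
      by blast
  qed
qed

lemma balanced_coloring_imp_equitable:
  assumes "\<forall>e\<in>E'. e \<subseteq> V" "E' \<subseteq> E" "balanced_coloring E V k d"
  shows "equitable_coloring V E' k d"
  unfolding equitable_coloring_def proper_coloring_def
proof (intro conjI ballI allI impI)
  show "d v < k" if "v \<in> V" for v
    using assms(3) that unfolding balanced_coloring_def proper_on_def by blast
next
  fix e u v
  assume "e \<in> E'" "u \<in> e" "v \<in> e" "u \<noteq> v"
  then have "adj E u v" "u \<in> V" "v \<in> V"
    using assms(1,2) unfolding adj_def by blast+
  then show "d u \<noteq> d v"
    using assms(3) unfolding balanced_coloring_def proper_on_def by blast
next
  fix i j
  assume "i < k" "j < k"
  then show "card {v\<in>V. d v = i} \<le> card {v\<in>V. d v = j} + 1"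
    using assms(3) add_div_le_Suc_add_div[OF \<open>i < k\<close>] unfolding balanced_coloring_def by simp
qed

lemma almost_equitably_colorableI:
  assumes "\<forall>e\<in>E. e \<subseteq> V" "V' \<subseteq> V" "card (V - V') \<le> q" "balanced_coloring E V' k d"
  shows "almost_equitably_colorable V E q k"
proof -
  define X where "X = V - V'"
  have "V - X = V'"
    unfolding X_def using assms(2) by blast
  moreover have "equitable_coloring V' {e\<in>E. e \<inter> X = {}} k d"
    using assms(1,4) \<open>V - X = V'\<close> by (intro balanced_coloring_imp_equitable) auto
  ultimately show ?thesis
    unfolding almost_equitably_colorable_def delete_vertices_def equitably_colorable_def
    using assms(3) unfolding X_def by (intro exI[of _ X]) (auto simp: X_def)
qed

theorem theorem4:
  fixes V :: "'a set" and E :: "'a set set" and k p :: nat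
  assumes "graph V E"
    and "colorable V E k"
    and "pathwidth_le V E p"
  shows "almost_equitably_colorable V E (p * (k - 1)) k"
proof -
  have fin: "finite V" and edges: "\<forall>e\<in>E. e \<subseteq> V"
    using assms(1) unfolding graph_def by auto
  obtain c where c: "proper_on E V k c"
    using assms(2) proper_coloring_imp_proper_on unfolding colorable_def by blast
  obtain \<kappa> where \<kappa>: "separation_le E V \<kappa> p"
    using pathwidth_le_imp_separation_le[OF fin assms(3)] by blast
  obtain V' d where "V' \<subseteq> V" "card (V - V') \<le> p * (k - 1)" "balanced_coloring E V' k d"
  proof (cases "p * (k - 1) \<le> card V")
    case True
    then show ?thesis
      using exists_balanced_subcoloring[OF fin \<kappa> c, of "card V - p * (k - 1)"] that fin
      by (auto simp: card_Diff_subset finite_subset)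
  next
    case False
    then show ?thesis
      by (intro that[of "{}"]) (auto simp: balanced_coloring_def proper_on_def)
  qed
  then show ?thesis
    using almost_equitably_colorableI[OF edges] by blast
qed

end
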